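(* Let $(X,d)$ be a compact metric space and $f:\mathbb N\to X$ a map whose anqie entropy equals $\lambda$ with $0\le\lambda<+\infty$. Then for every $N\ge1$ there is a map $f_N:\mathbb N\to f(\mathbb N)$ with finite range such that the anqie entropy of $f_N$ is at most $\lambda$ and $\sup_n d(f_N(n),f(n))\le 1/N$. In particular, for every bounded arithmetic function $f$ with $\mathrm{AE}(f)=\lambda<\infty$ and every $N\ge1$ there is an arithmetic function $f_N$ with finite range, $\mathrm{AE}(f_N)\le\lambda$ and $\|f_N-f\|_{l^\infty}\le 1/N$.
   Context: $\mathbb N=\{0,1,2,\ldots\}$. For a compact Hausdorff space $X$ and a map $f:\mathbb N\to X$, let $X_f$ be the closure in $X^{\mathbb N}$ (product topology) of $\{(f(n),f(n+1),f(n+2),\ldots):n\in\mathbb N\}$, and let $B_f$ be the shift $(\omega_0,\omega_1,\ldots)\mapsto(\omega_1,\omega_2,\ldots)$ restricted to $X_f$. The anqie entropy of $f$ is the topological entropy $h(B_f)$. For a bounded $f:\mathbb N\to\mathbb C$ this coincides with $\mathrm{AE}(f)$, the topological entropy of the shift-induced map on the maximal ideal space of the smallest unital C*-subalgebra of $l^\infty(\mathbb N)$ containing $f$ and invariant under $(\sigma_Ag)(n)=g(n+1)$. *)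

theory Defs
  imports "HOL-Analysis.Analysis"
begin

definition shift :: "(nat \<Rightarrow> 'a) \<Rightarrow> (nat \<Rightarrow> 'a)" where
  "shift \<omega> = (\<lambda>n. \<omega> (Suc n))"

text \<open>The orbit closure X_f of (f(n), f(n+1), ...) in the product space
  (the type nat => 'a carries the product topology).\<close>
definition orbit_space :: "(nat \<Rightarrow> 'a::topological_space) \<Rightarrow> (nat \<Rightarrow> 'a) set" where
  "orbit_space f = closure (range (\<lambda>n. (\<lambda>k. f (n + k))))"

definition min_subcover_card :: "'b set \<Rightarrow> 'b set set \<Rightarrow> nat" where
  "min_subcover_card K U = Inf {card V | V. V \<subseteq> U \<and> finite V \<and> K \<subseteq> \<Union>V}"

definition join_cover :: "('b \<Rightarrow> 'b) \<Rightarrow> nat \<Rightarrow> 'b set set \<Rightarrow> 'b set set" where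
  "join_cover T n U = {{x. \<forall>i<n. (T ^^ i) x \<in> A i} | A. \<forall>i<n. A i \<in> U}"

definition cover_entropy :: "'b set \<Rightarrow> ('b \<Rightarrow> 'b) \<Rightarrow> 'b set set \<Rightarrow> ereal" where
  "cover_entropy K T U =
     limsup (\<lambda>n. ereal (ln (real (min_subcover_card K (join_cover T n U))) / real n))"

definition topological_entropy :: "'b::topological_space set \<Rightarrow> ('b \<Rightarrow> 'b) \<Rightarrow> ereal" where
  "topological_entropy K T =
     (SUP U \<in> {U. (\<forall>A\<in>U. open A) \<and> K \<subseteq> \<Union>U}. cover_entropy K T U)"

definition anqie_entropy :: "(nat \<Rightarrow> 'a::topological_space) \<Rightarrow> ereal" where
  "anqie_entropy f = topological_entropy (orbit_space f) shift"

end

theory Submission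
  imports Defs
begin

text \<open>Fix a finite \<open>r\<close>-net \<open>C \<subseteq> range f\<close> of the closure of \<open>range f\<close>. Since the
  shift on \<open>X\<^sub>f\<close> has entropy at most \<open>\<lambda>\<close>, a cover of \<open>X\<^sub>f\<close> by \<open>r\<close>-cylinders around
  words of length \<open>n\<close> over \<open>C\<close> can be refined, for a suitable multiple \<open>m n\<close>, to a cover by
  at most \<open>exp ((\<lambda> + \<epsilon>) m n)\<close> cylinders around words of length \<open>m n\<close> whose aligned
  \<open>n\<close>-blocks are again among the given words. Iterating with \<open>\<epsilon> = 1/(k+1)\<close> yields a tower
  of word sets \<open>W k\<close> of lengths \<open>len k\<close>. The approximant copies on \<open>[len j, len (j+1))\<close>
  level-\<open>j\<close> words that shadow \<open>f\<close> within \<open>r\<close>, so every aligned block of length \<open>len k\<close>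
  after the first is a word of \<open>W k\<close>, and there are at most about \<open>card (W k) ^ (L / len k)\<close>
  factors of length \<open>L\<close>. For a sequence with finite range every open cover of the orbit space
  is determined by finitely many coordinates, so its entropy is bounded by the exponential
  growth rate of its factor counts, here \<open>\<lambda> + 1/(k+1)\<close> for every \<open>k\<close>.\<close>

section \<open>Orbit spaces\<close>

lemma funpow_shift: "(shift ^^ i) \<omega> = (\<lambda>k. \<omega> (i + k))"
  by (induction i arbitrary: \<omega>) (auto simp: shift_def funpow_Suc_right)

lemma tail_in_orbit_space: "(\<lambda>k. f (n + k)) \<in> orbit_space f"
  unfolding orbit_space_def by (rule closure_subset[THEN subsetD]) (rule rangeI)

lemma continuous_on_shift: "continuous_on UNIV (shift :: (nat \<Rightarrow> 'a::topological_space) \<Rightarrow> _)"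
  unfolding shift_def by (intro continuous_on_coordinatewise_then_product) simp

lemma shift_orbit_space_subset: "shift ` orbit_space (f :: nat \<Rightarrow> 'a::topological_space) \<subseteq> orbit_space f"
  unfolding orbit_space_def
proof (rule image_closure_subset)
  show "continuous_on (closure (range (\<lambda>n k. f (n + k)))) shift"
    by (rule continuous_on_subset[OF continuous_on_shift]) simp
  have "shift (\<lambda>k. f (n + k)) \<in> range (\<lambda>n k. f (n + k))" for n
    by (rule range_eqI[of _ _ "Suc n"]) (simp add: shift_def)
  then show "shift ` range (\<lambda>n k. f (n + k)) \<subseteq> closure (range (\<lambda>n k. f (n + k)))"
    using closure_subset by (auto intro!: image_subsetI)
qed (rule closed_closure)

lemma funpow_shift_in_orbit_space:
  "\<omega> \<in> orbit_space f \<Longrightarrow> (shift ^^ i) \<omega> \<in> orbit_space f"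
proof (induction i)
  case (Suc i)
  then show ?case
    using shift_orbit_space_subset by auto
qed simp

lemma orbit_space_subset_PiE_closure:
  "orbit_space f \<subseteq> Pi\<^sub>E UNIV (\<lambda>_. closure (range f))"
proof -
  have "(\<lambda>\<omega>. \<omega> i) ` orbit_space f \<subseteq> closure (range f)" for i
    unfolding orbit_space_def
  proof (rule image_closure_subset)
    show "continuous_on (closure (range (\<lambda>n k. f (n + k)))) (\<lambda>\<omega>. \<omega> i)"
      by (rule continuous_on_subset[OF continuous_on_product_coordinates]) simp
    show "(\<lambda>\<omega>. \<omega> i) ` range (\<lambda>n k. f (n + k)) \<subseteq> closure (range f)"
      using closure_subset by fastforce
  qed simp
  then show ?thesis by (auto simp: PiE_iff)
qed

lemma compact_orbit_space:
  assumes "compact (closure (range f))"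
  shows "compact (orbit_space f)"
proof -
  have "compact (Pi\<^sub>E UNIV (\<lambda>_::nat. closure (range f)))"
    using compactin_PiE[of "\<lambda>_. euclidean" UNIV "\<lambda>_. closure (range f)"] assms
    by (simp add: euclidean_product_topology)
  then have "compact (Pi\<^sub>E UNIV (\<lambda>_. closure (range f)) \<inter> orbit_space f)"
    by (rule compact_Int_closed) (simp add: orbit_space_def)
  moreover have "Pi\<^sub>E UNIV (\<lambda>_. closure (range f)) \<inter> orbit_space f = orbit_space f"
    using orbit_space_subset_PiE_closure by blast
  ultimately show ?thesis by simp
qed

lemma compact_orbit_space_finite_range:
  fixes g :: "nat \<Rightarrow> 'a::t1_space"
  assumes "finite (range g)"
  shows "compact (orbit_space g)"
  using assms by (intro compact_orbit_space) (simp add: finite_imp_closed finite_imp_compact)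

lemma length_concat_uniform:
  "\<forall>x\<in>set ws. length x = n \<Longrightarrow> length (concat ws) = length ws * n"
  by (induction ws) auto

lemma nth_concat_uniform:
  "\<forall>x\<in>set ws. length x = n \<Longrightarrow> t < length ws \<Longrightarrow> s < n \<Longrightarrow> concat ws ! (t * n + s) = ws ! t ! s"
proof (induction ws arbitrary: t)
  case (Cons x ws)
  then show ?case by (cases t) (auto simp: nth_append)
qed simp

lemma take_drop_concat_uniform:
  assumes "\<forall>x\<in>set ws. length x = n" "t < length ws"
  shows "take n (drop (t * n) (concat ws)) = ws ! t"
proof (rule nth_equalityI)
  have "Suc t * n \<le> length (concat ws)"
    using assms by (simp add: length_concat_uniform[OF assms(1)] mult_le_mono1 del: mult_Suc)
  then show "length (take n (drop (t * n) (concat ws))) = length (ws ! t)"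
    using assms by simp
  then show "take n (drop (t * n) (concat ws)) ! i = ws ! t ! i"
    if "i < length (take n (drop (t * n) (concat ws)))" for i
    using that assms \<open>Suc t * n \<le> length (concat ws)\<close> by (simp add: nth_concat_uniform)
qed

lemma take_drop_take_drop:
  "n + s \<le> m \<Longrightarrow> take n (drop s (take m (drop q w))) = take n (drop (q + s) w)"
  by (simp add: drop_take min_def add.commute)

lemma concat_map_upt_blocks:
  "concat (map (\<lambda>t. map (\<lambda>s. h (t * n + s)) [0..<n]) [0..<q]) = map h [0..<q * n]"
proof (induction q)
  case (Suc q)
  have "[0..<Suc q * n] = [0..<q * n] @ [q * n..<q * n + n]"
    using upt_add_eq_append[of 0 "q * n" n] by (simp add: add.commute)
  also have "[q * n..<q * n + n] = map (\<lambda>s. q * n + s) [0..<n]"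
    using map_add_upt[of "q * n" n] by (simp add: add.commute)
  finally have "[0..<Suc q * n] = [0..<q * n] @ map (\<lambda>s. q * n + s) [0..<n]" .
  then show ?case using Suc by simp
qed simp

lemma take_drop_map_upt:
  "r + L \<le> N \<Longrightarrow> take L (drop r (map h [0..<N])) = map (\<lambda>i. h (r + i)) [0..<L]"
proof -
  assume "r + L \<le> N"
  then have "take L (drop r [0..<N]) = map (\<lambda>i. i + r) [0..<L]" by (simp add: map_add_upt add.commute)
  then show ?thesis by (simp add: take_map drop_map add.commute)
qed

section \<open>Cylinders and join covers\<close>

definition cylinder :: "real \<Rightarrow> 'a::metric_space list \<Rightarrow> (nat \<Rightarrow> 'a) set" where
  "cylinder r w = {\<omega>. \<forall>i<length w. dist (w ! i) (\<omega> i) < r}"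

lemma open_cylinder: "open (cylinder r w)"
proof -
  have "cylinder r w = {\<omega>. \<forall>i\<in>{..<length w}. \<omega> (id i) \<in> ball (w ! i) r}"
    by (auto simp: cylinder_def)
  then show ?thesis
    by (simp only:) (rule product_topology_basis', auto)
qed

lemma finite_join_cover:
  assumes "finite U"
  shows "finite (join_cover T n U)"
proof -
  have "join_cover T n U \<subseteq> (\<lambda>A. {x. \<forall>i<n. (T ^^ i) x \<in> A i}) ` Pi\<^sub>E {..<n} (\<lambda>_. U)"
  proof
    fix S assume "S \<in> join_cover T n U"
    then obtain A where A: "\<forall>i<n. A i \<in> U" "S = {x. \<forall>i<n. (T ^^ i) x \<in> A i}"
      unfolding join_cover_def by blast
    then have "S = {x. \<forall>i<n. (T ^^ i) x \<in> restrict A {..<n} i}" by auto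
    moreover have "restrict A {..<n} \<in> Pi\<^sub>E {..<n} (\<lambda>_. U)" using A(1) by auto
    ultimately show "S \<in> (\<lambda>A. {x. \<forall>i<n. (T ^^ i) x \<in> A i}) ` Pi\<^sub>E {..<n} (\<lambda>_. U)" by blast
  qed
  moreover have "finite (Pi\<^sub>E {..<n} (\<lambda>_. U))" using assms by (simp add: finite_PiE)
  ultimately show ?thesis using finite_subset by blast
qed

lemma join_cover_covers:
  assumes "T ` K \<subseteq> K" "K \<subseteq> \<Union>U"
  shows "K \<subseteq> \<Union>(join_cover T n U)"
proof
  fix x assume "x \<in> K"
  then have "(T ^^ i) x \<in> K" for i
    by (induction i) (use assms(1) in auto)
  then have "\<forall>i. \<exists>A. A \<in> U \<and> (T ^^ i) x \<in> A" using assms(2) by blast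
  then obtain A where "\<And>i. A i \<in> U \<and> (T ^^ i) x \<in> A i" by metis
  then have "{y. \<forall>i<n. (T ^^ i) y \<in> A i} \<in> join_cover T n U" "x \<in> {y. \<forall>i<n. (T ^^ i) y \<in> A i}"
    unfolding join_cover_def by blast+
  then show "x \<in> \<Union>(join_cover T n U)" by blast
qed

lemma min_subcover_card_le:
  "V \<subseteq> U \<Longrightarrow> finite V \<Longrightarrow> K \<subseteq> \<Union>V \<Longrightarrow> min_subcover_card K U \<le> card V"
  unfolding min_subcover_card_def by (rule cInf_lower) auto

lemma min_subcover_card_pos:
  assumes "K \<noteq> {}" "V \<subseteq> U" "finite V" "K \<subseteq> \<Union>V"
  shows "0 < min_subcover_card K U"
proof -
  have "1 \<le> Inf {card V |V. V \<subseteq> U \<and> finite V \<and> K \<subseteq> \<Union>V}"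
    by (rule cInf_greatest) (use assms in \<open>auto simp: Suc_le_eq card_gt_0_iff\<close>)
  then show ?thesis unfolding min_subcover_card_def by simp
qed

lemma min_subcover_card_attained:
  assumes "finite U" "K \<subseteq> \<Union>U"
  obtains V where "V \<subseteq> U" "finite V" "K \<subseteq> \<Union>V" "card V = min_subcover_card K U"
proof -
  have "{card V | V. V \<subseteq> U \<and> finite V \<and> K \<subseteq> \<Union>V} \<noteq> {}" using assms by blast
  from Inf_nat_def1[OF this] show ?thesis
    using that unfolding min_subcover_card_def by auto
qed

lemma eventually_small_join_subcover:
  fixes K :: "'b::topological_space set"
  assumes "topological_entropy K T < ereal c" "\<forall>A\<in>U. open A" "finite U" "K \<subseteq> \<Union>U" "T ` K \<subseteq> K"
  shows "\<forall>\<^sub>F p in sequentially. \<exists>V \<subseteq> join_cover T p U. finite V \<and> K \<subseteq> \<Union>V \<and>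
    real (card V) \<le> exp (c * real p)"
proof -
  have "cover_entropy K T U \<le> topological_entropy K T"
    unfolding topological_entropy_def by (rule SUP_upper) (use assms(2,4) in auto)
  then have "limsup (\<lambda>p. ereal (ln (real (min_subcover_card K (join_cover T p U))) / real p)) < ereal c"
    using assms(1) unfolding cover_entropy_def by simp
  from Limsup_lessD[OF this]
  have "\<forall>\<^sub>F p in sequentially. ln (real (min_subcover_card K (join_cover T p U))) / real p < c"
    by simp
  then have "\<forall>\<^sub>F p in sequentially. ln (real (min_subcover_card K (join_cover T p U))) / real p < c \<and> 1 \<le> p"
    using eventually_ge_at_top by (rule eventually_conj)
  then show ?thesis
  proof (rule eventually_mono)
    fix p :: nat assume p: "ln (real (min_subcover_card K (join_cover T p U))) / real p < c \<and> 1 \<le> p"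
    obtain V where V: "V \<subseteq> join_cover T p U" "finite V" "K \<subseteq> \<Union>V"
      "card V = min_subcover_card K (join_cover T p U)"
      using min_subcover_card_attained[OF finite_join_cover[OF assms(3)] join_cover_covers[OF assms(5,4)]] .
    have "real (card V) \<le> exp (c * real p)"
    proof (cases "card V = 0")
      case False
      then have "ln (real (card V)) < c * real p" using p V(4) by (simp add: divide_less_eq)
      then show ?thesis using False by (metis exp_less_mono exp_ln less_imp_le of_nat_0_less_iff
          bot_nat_0.not_eq_extremum)
    qed simp
    then show "\<exists>V \<subseteq> join_cover T p U. finite V \<and> K \<subseteq> \<Union>V \<and> real (card V) \<le> exp (c * real p)"
      using V by blast
  qed
qed

lemma join_cover_shift_cylinders:
  assumes "S \<in> join_cover shift (m * n) (cylinder r ` W)" "\<forall>w\<in>W. length w = n" "0 < n"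
  obtains ws where "length ws = m" "set ws \<subseteq> W" "S \<subseteq> cylinder r (concat ws)"
proof -
  obtain A where A: "\<forall>i<m * n. A i \<in> cylinder r ` W" "S = {x. \<forall>i<m * n. (shift ^^ i) x \<in> A i}"
    using assms(1) unfolding join_cover_def by blast
  have "\<exists>w. w \<in> W \<and> A (t * n) = cylinder r w" if "t < m" for t
  proof -
    have "t * n < m * n" using that assms(3) by simp
    then show ?thesis using A(1) by blast
  qed
  then obtain wd where wd: "\<And>t. t < m \<Longrightarrow> wd t \<in> W \<and> A (t * n) = cylinder r (wd t)" by metis
  define ws where "ws = map wd [0..<m]"
  have uniform: "\<forall>x\<in>set ws. length x = n" using wd assms(2) by (auto simp: ws_def)
  have "\<omega> \<in> cylinder r (concat ws)" if "\<omega> \<in> S" for \<omega>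
    unfolding cylinder_def
  proof (intro CollectI allI impI)
    fix j assume "j < length (concat ws)"
    then have j: "j div n < m" "j mod n < n" "j = j div n * n + j mod n"
      using length_concat_uniform[OF uniform] assms(3) by (simp_all add: ws_def div_less_iff_less_mult)
    have "(shift ^^ (j div n * n)) \<omega> \<in> cylinder r (wd (j div n))"
      using that A wd[OF j(1)] j(1) assms(3) by auto
    then have "dist (wd (j div n) ! (j mod n)) (\<omega> j) < r"
      using wd[OF j(1)] assms(2) j by (auto simp: cylinder_def funpow_shift)
    moreover have "concat ws ! j = wd (j div n) ! (j mod n)"
      using nth_concat_uniform[OF uniform, of "j div n" "j mod n"] j by (simp add: ws_def)
    ultimately show "dist (concat ws ! j) (\<omega> j) < r" by simp
  qed
  moreover have "length ws = m" "set ws \<subseteq> W" using wd by (auto simp: ws_def)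
  ultimately show ?thesis using that by blast
qed

section \<open>Entropy of sequences with finite range\<close>

lemma open_product_finitely_determined:
  fixes A :: "(nat \<Rightarrow> 'b::topological_space) set"
  assumes "open A" "\<eta> \<in> A"
  obtains B M where "open B" "\<eta> \<in> B" "\<And>\<xi> \<eta>'. \<xi> \<in> B \<Longrightarrow> \<forall>i<M. \<eta>' i = \<xi> i \<Longrightarrow> \<eta>' \<in> A"
proof -
  have "openin (product_topology (\<lambda>i. euclidean) UNIV) A"
    using assms(1) by (simp add: open_fun_def)
  from product_topology_open_contains_basis[OF this assms(2)] obtain X where
    X: "\<eta> \<in> Pi\<^sub>E UNIV X" "\<And>i. open (X i)" "finite {i. X i \<noteq> UNIV}" "Pi\<^sub>E UNIV X \<subseteq> A"
    by auto
  define M where "M = Suc (Max (insert 0 {i. X i \<noteq> UNIV}))"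
  have "\<eta>' \<in> A" if "\<xi> \<in> Pi\<^sub>E UNIV X" "\<forall>i<M. \<eta>' i = \<xi> i" for \<xi> \<eta>'
  proof -
    have "\<eta>' i \<in> X i" for i
    proof (cases "X i = UNIV")
      case False
      then have "i < M" using X(3) by (simp add: M_def le_imp_less_Suc)
      then show ?thesis using that by (auto simp: PiE_iff)
    qed simp
    then show ?thesis using X(4) by (auto simp: PiE_iff)
  qed
  moreover have "open (Pi\<^sub>E UNIV X)" using X(2,3) by (rule open_PiE)
  ultimately show ?thesis using that X(1) by blast
qed

lemma Lebesgue_number_lemma_product:
  fixes K :: "(nat \<Rightarrow> 'b::topological_space) set"
  assumes "compact K" "\<forall>A\<in>U. open A" "K \<subseteq> \<Union>U"
  obtains M where "\<forall>\<eta>\<in>K. \<exists>A\<in>U. \<forall>\<eta>'. (\<forall>i<M. \<eta>' i = \<eta> i) \<longrightarrow> \<eta>' \<in> A"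
proof -
  have "\<exists>A B M. A \<in> U \<and> open B \<and> \<eta> \<in> B \<and> (\<forall>\<xi>\<in>B. \<forall>\<eta>'. (\<forall>i<M. \<eta>' i = \<xi> i) \<longrightarrow> \<eta>' \<in> A)"
    if "\<eta> \<in> K" for \<eta>
  proof -
    obtain A where "A \<in> U" "\<eta> \<in> A" using assms(3) \<open>\<eta> \<in> K\<close> by blast
    with assms(2) obtain B M where "open B" "\<eta> \<in> B"
      "\<And>\<xi> \<eta>'. \<xi> \<in> B \<Longrightarrow> \<forall>i<M. \<eta>' i = \<xi> i \<Longrightarrow> \<eta>' \<in> A"
      by (metis open_product_finitely_determined)
    with \<open>A \<in> U\<close> show ?thesis by blast
  qed
  then obtain A B M where ABM: "\<And>\<eta>. \<eta> \<in> K \<Longrightarrow> A \<eta> \<in> U \<and> open (B \<eta>) \<and> \<eta> \<in> B \<eta> \<and>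
      (\<forall>\<xi>\<in>B \<eta>. \<forall>\<eta>'. (\<forall>i<M \<eta>. \<eta>' i = \<xi> i) \<longrightarrow> \<eta>' \<in> A \<eta>)"
    by metis
  obtain T where T: "T \<subseteq> K" "finite T" "K \<subseteq> (\<Union>\<eta>\<in>T. B \<eta>)"
    using compactE_image[OF assms(1), of K B] ABM by blast
  have "\<exists>A\<in>U. \<forall>\<eta>'. (\<forall>i<Max (insert 0 (M ` T)). \<eta>' i = \<eta> i) \<longrightarrow> \<eta>' \<in> A" if "\<eta> \<in> K" for \<eta>
  proof -
    obtain t where t: "t \<in> T" "\<eta> \<in> B t" using T(3) \<open>\<eta> \<in> K\<close> by blast
    have "M t \<le> Max (insert 0 (M ` T))" using T(2) t(1) by simp
    then show ?thesis using ABM[of t] T(1) t by (meson in_mono less_le_trans)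
  qed
  then show ?thesis using that by blast
qed

lemma limsup_ln_div_le:
  fixes a :: "nat \<Rightarrow> real"
  assumes "D > 0" and "\<And>n. n \<ge> 1 \<Longrightarrow> 0 < a n \<and> a n \<le> D * exp (c * real n)"
  shows "limsup (\<lambda>n. ereal (ln (a n) / real n)) \<le> ereal c"
proof -
  have "ereal (ln (a n) / real n) \<le> ereal (ln D / real n + c)" if "n \<ge> 1" for n
  proof -
    have "ln (a n) \<le> ln (D * exp (c * real n))" using assms(2)[OF that] by simp
    also have "\<dots> = ln D + c * real n" using assms(1) by (simp add: ln_mult)
    finally show ?thesis using that by (simp add: field_simps)
  qed
  then have "limsup (\<lambda>n. ereal (ln (a n) / real n)) \<le> limsup (\<lambda>n. ereal (ln D / real n + c))"
    by (intro Limsup_mono) (auto simp: eventually_sequentially)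
  also have "\<dots> = ereal c"
  proof (rule lim_imp_Limsup)
    have "(\<lambda>n. ln D / real n + c) \<longlonglongrightarrow> 0 + c"
      by (intro tendsto_add lim_const_over_n tendsto_const)
    then show "(\<lambda>n. ereal (ln D / real n + c)) \<longlonglongrightarrow> ereal c" by (simp add: tendsto_ereal)
  qed simp
  finally show ?thesis .
qed

definition factors :: "(nat \<Rightarrow> 'a) \<Rightarrow> nat \<Rightarrow> 'a list set" where
  "factors g L = range (\<lambda>p. map (\<lambda>i. g (p + i)) [0..<L])"

lemma finite_factors:
  assumes "finite (range g)"
  shows "finite (factors g L)"
proof (rule finite_subset)
  show "factors g L \<subseteq> {xs. set xs \<subseteq> range g \<and> length xs = L}"
    by (auto simp: factors_def)
qed (use assms in \<open>simp add: finite_lists_length_eq\<close>)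

lemma prefix_in_factors:
  fixes g :: "nat \<Rightarrow> 'a::t1_space"
  assumes "finite (range g)" "\<omega> \<in> orbit_space g"
  shows "map \<omega> [0..<L] \<in> factors g L"
proof -
  define Nb where "Nb = {\<eta>. \<forall>i\<in>{..<L}. \<eta> (id i) \<in> - (range g - {\<omega> i})}"
  have "open (- (range g - {\<omega> i}))" for i
    using assms(1) by (intro open_Compl finite_imp_closed) simp
  then have "open Nb"
    unfolding Nb_def by (intro product_topology_basis') simp_all
  moreover have "\<omega> \<in> Nb" by (simp add: Nb_def)
  moreover have "\<omega> \<in> closure (range (\<lambda>n k. g (n + k)))"
    using assms(2) by (simp add: orbit_space_def)
  ultimately have "Nb \<inter> closure (range (\<lambda>n k. g (n + k))) \<noteq> {}" by blast
  then have "Nb \<inter> range (\<lambda>n k. g (n + k)) \<noteq> {}"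
    using open_Int_closure_eq_empty[OF \<open>open Nb\<close>] by simp
  then obtain p where "(\<lambda>k. g (p + k)) \<in> Nb" by blast
  then have p: "g (p + i) \<notin> range g - {\<omega> i}" if "i < L" for i
    using that unfolding Nb_def by simp
  have "map \<omega> [0..<L] = map (\<lambda>i. g (p + i)) [0..<L]"
    using p by (intro map_cong) auto
  then show ?thesis unfolding factors_def by (rule image_eqI) simp
qed

lemma shift_join_of_agreeing_prefix:
  assumes "\<forall>j<n + M. x j = \<xi> j"
    and "\<And>i \<eta>'. i < n \<Longrightarrow> \<forall>j<M. \<eta>' j = (shift ^^ i) \<xi> j \<Longrightarrow> \<eta>' \<in> A i"
  shows "x \<in> {y. \<forall>i<n. (shift ^^ i) y \<in> A i}"
proof (intro CollectI allI impI)
  fix i assume "i < n"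
  then have "\<forall>j<M. (shift ^^ i) x j = (shift ^^ i) \<xi> j" using assms(1) by (simp add: funpow_shift)
  with \<open>i < n\<close> show "(shift ^^ i) x \<in> A i" by (rule assms(2))
qed

lemma join_cover_subcover_by_factors:
  fixes g :: "nat \<Rightarrow> 'a::t1_space"
  assumes fin: "finite (range g)"
    and M: "\<forall>\<eta>\<in>orbit_space g. \<exists>A\<in>U. \<forall>\<eta>'. (\<forall>i<M. \<eta>' i = \<eta> i) \<longrightarrow> \<eta>' \<in> A"
  obtains V where "V \<subseteq> join_cover shift n U" "finite V" "orbit_space g \<subseteq> \<Union>V"
    "card V \<le> card (factors g (n + M))"
proof -
  define Pre where "Pre = (\<lambda>\<omega>. map \<omega> [0..<n + M]) ` orbit_space g"
  have Pre_sub: "Pre \<subseteq> factors g (n + M)"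
    using prefix_in_factors[OF fin] by (auto simp: Pre_def)
  then have "finite Pre" using finite_factors[OF fin] finite_subset by blast
  have "\<forall>u\<in>Pre. \<exists>\<omega>. \<omega> \<in> orbit_space g \<and> map \<omega> [0..<n + M] = u" by (auto simp: Pre_def)
  from bchoice[OF this] obtain rep where
    rep: "\<And>u. u \<in> Pre \<Longrightarrow> rep u \<in> orbit_space g \<and> map (rep u) [0..<n + M] = u" by blast
  from bchoice[OF M[unfolded Bex_def]] obtain A where A: "\<And>\<eta>. \<eta> \<in> orbit_space g \<Longrightarrow>
      A \<eta> \<in> U \<and> (\<forall>\<eta>'. (\<forall>i<M. \<eta>' i = \<eta> i) \<longrightarrow> \<eta>' \<in> A \<eta>)" by blast
  define JS where "JS u = {x. \<forall>i<n. (shift ^^ i) x \<in> A ((shift ^^ i) (rep u))}" for u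
  define V where "V = JS ` Pre"
  have "JS u \<in> join_cover shift n U" if "u \<in> Pre" for u
  proof -
    have "\<forall>i<n. A ((shift ^^ i) (rep u)) \<in> U"
      using A funpow_shift_in_orbit_space rep[OF that] by blast
    then show ?thesis
      unfolding JS_def join_cover_def by (intro CollectI exI[of _ "\<lambda>i. A ((shift ^^ i) (rep u))"]) simp
  qed
  then have "V \<subseteq> join_cover shift n U" by (auto simp: V_def)
  moreover have "orbit_space g \<subseteq> \<Union>V"
  proof
    fix x assume "x \<in> orbit_space g"
    then have u: "map x [0..<n + M] \<in> Pre" unfolding Pre_def by (rule imageI)
    have "\<eta>' \<in> A ((shift ^^ i) (rep (map x [0..<n + M])))"
      if "\<forall>j<M. \<eta>' j = (shift ^^ i) (rep (map x [0..<n + M])) j" for i \<eta>'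
      using A[OF funpow_shift_in_orbit_space] rep[OF u] that by blast
    moreover have "\<forall>j<n + M. x j = rep (map x [0..<n + M]) j"
      using rep[OF u] by (simp add: map_eq_conv)
    ultimately have "x \<in> JS (map x [0..<n + M])"
      unfolding JS_def by (intro shift_join_of_agreeing_prefix)
    then show "x \<in> \<Union>V" using u by (auto simp: V_def)
  qed
  moreover have "card V \<le> card (factors g (n + M))"
    using card_image_le[OF \<open>finite Pre\<close>, of JS] card_mono[OF finite_factors[OF fin] Pre_sub]
    by (simp add: V_def)
  moreover have "finite V" using \<open>finite Pre\<close> by (simp add: V_def)
  ultimately show ?thesis using that by blast
qed

lemma anqie_entropy_le_factor_growth:
  fixes g :: "nat \<Rightarrow> 'a::t1_space"
  assumes fin: "finite (range g)" and "D > 0"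
    and growth: "\<And>L. real (card (factors g L)) \<le> D * exp (c * real L)"
  shows "anqie_entropy g \<le> ereal c"
  unfolding anqie_entropy_def topological_entropy_def
proof (rule SUP_least)
  fix U assume "U \<in> {U. (\<forall>A\<in>U. open A) \<and> orbit_space g \<subseteq> \<Union>U}"
  then obtain M where M: "\<forall>\<eta>\<in>orbit_space g. \<exists>A\<in>U. \<forall>\<eta>'. (\<forall>i<M. \<eta>' i = \<eta> i) \<longrightarrow> \<eta>' \<in> A"
    using Lebesgue_number_lemma_product[OF compact_orbit_space_finite_range[OF fin]] by blast
  have "0 < real (min_subcover_card (orbit_space g) (join_cover shift n U)) \<and>
    real (min_subcover_card (orbit_space g) (join_cover shift n U)) \<le> (D * exp (c * real M)) * exp (c * real n)"
    for n
  proof -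
    obtain V where V: "V \<subseteq> join_cover shift n U" "finite V" "orbit_space g \<subseteq> \<Union>V"
      "card V \<le> card (factors g (n + M))"
      using join_cover_subcover_by_factors[OF fin M] .
    have "orbit_space g \<noteq> {}" using tail_in_orbit_space by blast
    then have "0 < min_subcover_card (orbit_space g) (join_cover shift n U)"
      using V(1-3) by (rule min_subcover_card_pos)
    moreover have "real (min_subcover_card (orbit_space g) (join_cover shift n U)) \<le> real (card (factors g (n + M)))"
      using min_subcover_card_le[OF V(1-3)] V(4) by linarith
    moreover have "real (card (factors g (n + M))) \<le> (D * exp (c * real M)) * exp (c * real n)"
      using growth[of "n + M"] by (simp add: exp_add[symmetric] algebra_simps)
    ultimately show ?thesis by linarith
  qed
  then show "cover_entropy (orbit_space g) shift U \<le> ereal c"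
    unfolding cover_entropy_def using \<open>D > 0\<close>
    by (intro limsup_ln_div_le[where D = "D * exp (c * real M)"]) simp_all
qed

lemma factor_in_aligned_blocks:
  assumes "0 < n" "n \<le> p" and blocks: "\<And>b. 1 \<le> b \<Longrightarrow> map (\<lambda>s. g (b * n + s)) [0..<n] \<in> B"
  obtains ws where "set ws \<subseteq> B" "length ws = L div n + 2"
    "map (\<lambda>i. g (p + i)) [0..<L] = take L (drop (p mod n) (concat ws))"
proof -
  define q where "q = L div n + 2"
  define b where "b = p div n"
  define h where "h = (\<lambda>j. g (b * n + j))"
  define ws where "ws = map (\<lambda>t. map (\<lambda>s. h (t * n + s)) [0..<n]) [0..<q]"
  have "1 \<le> b" using assms(1,2) by (simp add: b_def div_greater_zero_iff Suc_le_eq)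
  have "map (\<lambda>s. h (t * n + s)) [0..<n] \<in> B" for t
  proof -
    have "h (t * n + s) = g ((b + t) * n + s)" for s by (simp add: h_def algebra_simps)
    then show ?thesis using blocks \<open>1 \<le> b\<close> by simp
  qed
  then have "set ws \<subseteq> B" "length ws = q" by (auto simp: ws_def)
  have "L < (L div n + 1) * n" using \<open>0 < n\<close>
    by (metis div_mult_mod_eq add_less_cancel_left mod_less_divisor distrib_right mult_1)
  moreover have "p mod n < n" using \<open>0 < n\<close> by simp
  ultimately have "p mod n + L \<le> q * n" by (simp add: q_def)
  then have "take L (drop (p mod n) (concat ws)) = map (\<lambda>i. h (p mod n + i)) [0..<L]"
    by (simp add: ws_def concat_map_upt_blocks take_drop_map_upt)
  also have "\<dots> = map (\<lambda>i. g (p + i)) [0..<L]"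
    by (simp add: h_def b_def add.assoc[symmetric])
  finally show ?thesis using that \<open>set ws \<subseteq> B\<close> \<open>length ws = q\<close> unfolding q_def by simp
qed

lemma card_factors_le_blocks:
  assumes "0 < n" "finite B" and blocks: "\<And>b. 1 \<le> b \<Longrightarrow> map (\<lambda>s. g (b * n + s)) [0..<n] \<in> B"
  shows "card (factors g L) \<le> n + n * card B ^ (L div n + 2)"
proof -
  define q where "q = L div n + 2"
  define Bq where "Bq = {ws. set ws \<subseteq> B \<and> length ws = q}"
  \<comment> \<open>the block at position 0 need not be in \<open>B\<close>, so factors starting before \<open>n\<close> are counted apart\<close>
  define S1 where "S1 = (\<lambda>p. map (\<lambda>i. g (p + i)) [0..<L]) ` {..<n}"
  define S2 where "S2 = (\<lambda>(r, ws). take L (drop r (concat ws))) ` ({..<n} \<times> Bq)"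
  have "factors g L \<subseteq> S1 \<union> S2"
  proof
    fix u assume "u \<in> factors g L"
    then obtain p where u: "u = map (\<lambda>i. g (p + i)) [0..<L]" by (auto simp: factors_def)
    show "u \<in> S1 \<union> S2"
    proof (cases "p < n")
      case True
      then show ?thesis unfolding u S1_def by blast
    next
      case False
      then obtain ws where "ws \<in> Bq" "u = take L (drop (p mod n) (concat ws))"
        using factor_in_aligned_blocks[OF \<open>0 < n\<close> _ blocks] u unfolding Bq_def q_def
        by (metis (mono_tags, lifting) mem_Collect_eq not_less)
      moreover have "p mod n < n" using \<open>0 < n\<close> by simp
      ultimately show ?thesis
        unfolding S2_def by (intro UnI2 image_eqI[where x = "(p mod n, ws)"]) simp_all
    qed
  qed
  have "finite Bq" "card Bq = card B ^ q"
    using assms(2) by (simp_all add: Bq_def finite_lists_length_eq card_lists_length_eq)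
  then have "finite S2" "card S2 \<le> n * card B ^ q"
    unfolding S2_def using card_image_le[of "{..<n} \<times> Bq"] by (simp_all add: card_cartesian_product)
  moreover have "finite S1" "card S1 \<le> n"
    unfolding S1_def using card_image_le[of "{..<n}"] by simp_all
  ultimately have "card (factors g L) \<le> card S1 + card S2"
    using card_mono[OF _ \<open>factors g L \<subseteq> S1 \<union> S2\<close>] card_Un_le[of S1 S2] by (meson finite_UnI le_trans)
  with \<open>card S1 \<le> n\<close> \<open>card S2 \<le> n * card B ^ q\<close> show ?thesis unfolding q_def by linarith
qed

section \<open>Refining covers by words\<close>

locale entropy_net =
  fixes f :: "nat \<Rightarrow> 'a::metric_space" and r lam :: real and C :: "'a set"
  assumes entropy_le: "anqie_entropy f \<le> ereal lam"
    and finite_net: "finite C"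
    and net_dense: "\<And>x. x \<in> closure (range f) \<Longrightarrow> \<exists>c\<in>C. dist c x < r"
begin

definition covering_words :: "nat \<Rightarrow> 'a list set \<Rightarrow> bool" where
  "covering_words n W \<longleftrightarrow> 1 \<le> n \<and> finite W \<and> (\<forall>w\<in>W. length w = n \<and> set w \<subseteq> C) \<and>
     orbit_space f \<subseteq> \<Union>(cylinder r ` W)"

lemma covering_words_singletons: "covering_words 1 ((\<lambda>c. [c]) ` C)"
  unfolding covering_words_def
proof (intro conjI)
  show "orbit_space f \<subseteq> \<Union>(cylinder r ` (\<lambda>c. [c]) ` C)"
  proof
    fix \<omega> assume "\<omega> \<in> orbit_space f"
    then have "\<omega> 0 \<in> closure (range f)" using orbit_space_subset_PiE_closure by blast
    then obtain c where "c \<in> C" "dist c (\<omega> 0) < r" using net_dense by blast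
    then show "\<omega> \<in> \<Union>(cylinder r ` (\<lambda>c. [c]) ` C)" by (auto simp: cylinder_def)
  qed
qed (use finite_net in auto)

lemma covering_words_of_join_subcover:
  assumes W: "covering_words n W" and "0 < m"
    and V: "V \<subseteq> join_cover shift (m * n) (cylinder r ` W)" "finite V" "orbit_space f \<subseteq> \<Union>V"
  obtains W' where "covering_words (m * n) W'"
    "\<And>w t. w \<in> W' \<Longrightarrow> t < m \<Longrightarrow> take n (drop (t * n) w) \<in> W" "card W' \<le> card V"
proof -
  have n: "1 \<le> n" "\<forall>w\<in>W. length w = n \<and> set w \<subseteq> C"
    using W by (simp_all add: covering_words_def)
  have "\<exists>ws. length ws = m \<and> set ws \<subseteq> W \<and> S \<subseteq> cylinder r (concat ws)" if "S \<in> V" for S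
  proof -
    have "S \<in> join_cover shift (m * n) (cylinder r ` W)" using that V(1) by blast
    from join_cover_shift_cylinders[OF this] n show ?thesis by auto
  qed
  then obtain ws where ws: "\<And>S. S \<in> V \<Longrightarrow>
      length (ws S) = m \<and> set (ws S) \<subseteq> W \<and> S \<subseteq> cylinder r (concat (ws S))"
    by metis
  define W' where "W' = (\<lambda>S. concat (ws S)) ` V"
  have uniform: "\<forall>x\<in>set (ws S). length x = n" if "S \<in> V" for S
    using ws[OF that] n(2) by auto
  have "covering_words (m * n) W'"
    unfolding covering_words_def
  proof (intro conjI)
    show "1 \<le> m * n" using n(1) \<open>0 < m\<close> by simp
    show "finite W'" using V(2) by (simp add: W'_def)
    show "\<forall>w\<in>W'. length w = m * n \<and> set w \<subseteq> C"
    proof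
      fix w assume "w \<in> W'"
      then obtain S where S: "S \<in> V" "w = concat (ws S)" by (auto simp: W'_def)
      then show "length w = m * n \<and> set w \<subseteq> C"
        using ws[OF S(1)] n(2) length_concat_uniform[OF uniform[OF S(1)]] by auto
    qed
    show "orbit_space f \<subseteq> \<Union>(cylinder r ` W')"
    proof
      fix \<omega> assume "\<omega> \<in> orbit_space f"
      then obtain S where "S \<in> V" "\<omega> \<in> S" using V(3) by blast
      then show "\<omega> \<in> \<Union>(cylinder r ` W')" using ws unfolding W'_def by blast
    qed
  qed
  moreover have "take n (drop (t * n) w) \<in> W" if w: "w \<in> W'" and t: "t < m" for w t
  proof -
    obtain S where S: "S \<in> V" "w = concat (ws S)" using w by (auto simp: W'_def)
    then have "take n (drop (t * n) w) = ws S ! t"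
      using take_drop_concat_uniform[OF uniform[OF S(1)]] ws t by simp
    then show ?thesis using ws[OF S(1)] t by auto
  qed
  moreover have "card W' \<le> card V"
    unfolding W'_def using V(2) by (rule card_image_le)
  ultimately show ?thesis using that by blast
qed

lemma covering_words_refine:
  assumes W: "covering_words n W" and "0 < \<epsilon>"
  obtains m W' where "2 \<le> m" "covering_words (m * n) W'"
    "\<And>w t. w \<in> W' \<Longrightarrow> t < m \<Longrightarrow> take n (drop (t * n) w) \<in> W"
    "real (card W') \<le> exp ((lam + \<epsilon>) * real (m * n))"
proof -
  have n: "1 \<le> n" "finite W" "orbit_space f \<subseteq> \<Union>(cylinder r ` W)"
    using W by (simp_all add: covering_words_def)
  have "topological_entropy (orbit_space f) shift < ereal (lam + \<epsilon>)"
    using entropy_le \<open>0 < \<epsilon>\<close> by (simp add: anqie_entropy_def le_less_trans)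
  from eventually_small_join_subcover[OF this _ _ n(3) shift_orbit_space_subset] n(2)
  obtain P where P: "\<And>p. P \<le> p \<Longrightarrow> \<exists>V \<subseteq> join_cover shift p (cylinder r ` W). finite V \<and>
      orbit_space f \<subseteq> \<Union>V \<and> real (card V) \<le> exp ((lam + \<epsilon>) * real p)"
    by (auto simp: open_cylinder eventually_sequentially)
  define m where "m = P + 2"
  have "P * 1 \<le> m * n" using n(1) by (intro mult_le_mono) (simp_all add: m_def)
  then obtain V where V: "V \<subseteq> join_cover shift (m * n) (cylinder r ` W)" "finite V"
    "orbit_space f \<subseteq> \<Union>V" "real (card V) \<le> exp ((lam + \<epsilon>) * real (m * n))"
    using P[of "m * n"] by auto
  have "0 < m" by (simp add: m_def)
  from covering_words_of_join_subcover[OF W this V(1-3)] obtain W' where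
    "covering_words (m * n) W'" "\<And>w t. w \<in> W' \<Longrightarrow> t < m \<Longrightarrow> take n (drop (t * n) w) \<in> W"
    "card W' \<le> card V"
    by blast
  moreover have "2 \<le> m" by (simp add: m_def)
  ultimately show ?thesis using that V(4) by (meson of_nat_le_iff order_trans)
qed

end

section \<open>The approximant\<close>

locale word_tower = entropy_net f r lam C for f :: "nat \<Rightarrow> 'a::metric_space" and r lam C +
  fixes len :: "nat \<Rightarrow> nat" and Words :: "nat \<Rightarrow> 'a list set" and ratio :: "nat \<Rightarrow> nat"
  assumes covering: "covering_words (len k) (Words k)"
    and ratio_ge: "2 \<le> ratio k"
    and len_Suc: "len (Suc k) = ratio k * len k"
    and blocks: "w \<in> Words (Suc k) \<Longrightarrow> t < ratio k \<Longrightarrow> take (len k) (drop (t * len k) w) \<in> Words k"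
    and card_Words: "real (card (Words (Suc k))) \<le> exp ((lam + 1 / real (Suc k)) * real (len (Suc k)))"
begin

lemma len_pos: "0 < len k"
  using covering[of k] by (simp add: covering_words_def)

lemma Words_length: "w \<in> Words k \<Longrightarrow> length w = len k"
  using covering[of k] by (simp add: covering_words_def)

lemma Words_subset_net: "w \<in> Words k \<Longrightarrow> set w \<subseteq> C"
  using covering[of k] by (simp add: covering_words_def)

lemma finite_Words: "finite (Words k)"
  using covering[of k] by (simp add: covering_words_def)

lemma orbit_space_subset_Words: "orbit_space f \<subseteq> \<Union>(cylinder r ` Words k)"
  using covering[of k] by (simp add: covering_words_def)

lemma len_less_Suc: "len k < len (Suc k)"
  using len_pos[of k] ratio_ge[of k] by (simp add: len_Suc)

lemma len_mono: "k \<le> j \<Longrightarrow> len k \<le> len j"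
  using len_less_Suc by (metis less_imp_le lift_Suc_mono_le)

lemma less_len: "k < len k"
proof (induction k)
  case (Suc k)
  then show ?case using len_less_Suc[of k] by simp
qed (use len_pos in simp)

lemma len_dvd: "k \<le> j \<Longrightarrow> len k dvd len j"
  by (induction j rule: dec_induct) (simp_all add: len_Suc)

lemma block_in_Words:
  assumes "k \<le> j" "w \<in> Words j" "t < len j div len k"
  shows "take (len k) (drop (t * len k) w) \<in> Words k"
  using assms
proof (induction j arbitrary: w t rule: dec_induct)
  case base
  then show ?case using len_pos[of k] Words_length by simp
next
  case (step j)
  define a where "a = len j div len k"
  have len_j: "len j = a * len k" using len_dvd[OF step(1)] by (simp add: a_def)
  then have "0 < a" using len_pos[of j] by simp
  have "t < ratio j * a" using step(5) len_pos[of k] by (simp add: len_Suc len_j)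
  then have "t div a < ratio j" using \<open>0 < a\<close> by (simp add: div_less_iff_less_mult)
  then have "take (len j) (drop (t div a * len j) w) \<in> Words j" using blocks step(4) by simp
  then have "take (len k) (drop (t mod a * len k) (take (len j) (drop (t div a * len j) w))) \<in> Words k"
    using step(3) \<open>0 < a\<close> by (simp add: a_def)
  moreover have "len k + t mod a * len k \<le> len j"
    using \<open>0 < a\<close> by (simp add: len_j mult_le_mono1 Suc_leI flip: mult_Suc)
  moreover have "t div a * len j + t mod a * len k = t * len k"
    by (simp add: len_j mult.assoc[symmetric] flip: distrib_right)
  ultimately show ?case by (simp add: take_drop_take_drop)
qed

definition level :: "nat \<Rightarrow> nat" where
  "level p = (LEAST j. p < len (Suc j))"

lemma less_len_Suc_level: "p < len (Suc (level p))"
  unfolding level_def by (rule LeastI[of _ p]) (use less_len[of "Suc p"] in simp)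

lemma len_level_le: "level p = 0 \<or> len (level p) \<le> p"
proof (cases "level p")
  case (Suc i)
  then have "\<not> p < len (Suc i)" unfolding level_def by (metis lessI not_less_Least)
  then show ?thesis using Suc by simp
qed simp

lemma level_eqI:
  assumes "p < len (Suc j)" "j = 0 \<or> len j \<le> p"
  shows "level p = j"
proof -
  have "level p \<le> j" unfolding level_def using assms(1) by (rule Least_le)
  moreover have "\<not> level p < j"
    using len_mono[of "Suc (level p)" j] less_len_Suc_level[of p] assms(2) by auto
  ultimately show ?thesis by simp
qed

definition level_word :: "nat \<Rightarrow> nat \<Rightarrow> 'a list" where
  "level_word j q = (SOME w. w \<in> Words j \<and> (\<lambda>i. f (q * len j + i)) \<in> cylinder r w)"

lemma level_word: "level_word j q \<in> Words j \<and> (\<lambda>i. f (q * len j + i)) \<in> cylinder r (level_word j q)"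
proof -
  have "\<exists>w. w \<in> Words j \<and> (\<lambda>i. f (q * len j + i)) \<in> cylinder r w"
    using tail_in_orbit_space orbit_space_subset_Words by blast
  then show ?thesis unfolding level_word_def by (rule someI_ex)
qed

definition approx :: "nat \<Rightarrow> 'a" where
  "approx p = level_word (level p) (p div len (level p)) ! (p mod len (level p))"

lemma approx_level_word:
  assumes "level (q * len j + i) = j" "i < len j"
  shows "approx (q * len j + i) = level_word j q ! i"
  using assms by (simp add: approx_def)

lemma approx_in_net_and_close: "approx p \<in> C \<and> dist (approx p) (f p) < r"
proof -
  define j where "j = level p"
  define w where "w = level_word j (p div len j)"
  have "w \<in> Words j" "(\<lambda>i. f (p div len j * len j + i)) \<in> cylinder r w"
    using level_word by (simp_all add: w_def)
  moreover have "p mod len j < length w"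
    using Words_length[OF \<open>w \<in> Words j\<close>] len_pos by simp
  ultimately have "w ! (p mod len j) \<in> set w" "dist (w ! (p mod len j)) (f p) < r"
    by (auto simp: cylinder_def)
  then have "w ! (p mod len j) \<in> C" "dist (w ! (p mod len j)) (f p) < r"
    using Words_subset_net[OF \<open>w \<in> Words j\<close>] by auto
  then show ?thesis by (simp add: approx_def j_def w_def)
qed

lemma level_aligned_block:
  assumes "1 \<le> b"
  shows "k \<le> level (b * len k)" and "s < len k \<Longrightarrow> level (b * len k + s) = level (b * len k)"
proof -
  define j where "j = level (b * len k)"
  have "len k \<le> b * len k" using assms by simp
  show "k \<le> j"
  proof (rule ccontr)
    assume "\<not> k \<le> j"
    then have "len (Suc j) \<le> len k" by (intro len_mono) simp
    then show False
      using less_len_Suc_level[of "b * len k"] \<open>len k \<le> b * len k\<close> by (simp add: j_def)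
  qed
  then obtain c where c: "len (Suc j) = c * len k"
    using len_dvd[of k "Suc j"] by (metis dvd_def le_SucI mult.commute)
  then have "b < c" using less_len_Suc_level[of "b * len k"] by (simp add: j_def)
  then have "b * len k + len k \<le> len (Suc j)"
    using c mult_le_mono1[of "Suc b" c "len k"] by simp
  then show "level (b * len k + s) = j" if "s < len k"
    using that len_level_le[of "b * len k"] by (intro level_eqI) (auto simp: j_def)
qed

lemma aligned_block_approx:
  assumes "1 \<le> b"
  shows "map (\<lambda>s. approx (b * len k + s)) [0..<len k] \<in> Words k"
proof -
  define j where "j = level (b * len k)"
  have "k \<le> j" using level_aligned_block(1)[OF assms] by (simp add: j_def)
  define a where "a = len j div len k"
  have len_j: "len j = a * len k" using len_dvd[OF \<open>k \<le> j\<close>] by (simp add: a_def)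
  then have "0 < a" using len_pos[of j] by simp
  define w0 where "w0 = level_word j (b div a)"
  have "w0 \<in> Words j" using level_word by (simp add: w0_def)
  have inner: "len k + b mod a * len k \<le> len j"
    using \<open>0 < a\<close> by (simp add: len_j mult_le_mono1 Suc_leI flip: mult_Suc)
  have "approx (b * len k + s) = take (len k) (drop (b mod a * len k) w0) ! s" if "s < len k" for s
  proof -
    have split: "b * len k + s = b div a * len j + (b mod a * len k + s)"
      by (simp add: len_j mult.assoc[symmetric] flip: distrib_right)
    have "level (b * len k + s) = j"
      using level_aligned_block(2)[OF assms that] by (simp add: j_def)
    then have "approx (b * len k + s) = w0 ! (b mod a * len k + s)"
      using inner that approx_level_word[of "b div a" j] by (simp add: split w0_def)
    also have "\<dots> = take (len k) (drop (b mod a * len k) w0) ! s"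
      using inner that Words_length[OF \<open>w0 \<in> Words j\<close>] by simp
    finally show ?thesis .
  qed
  moreover have "take (len k) (drop (b mod a * len k) w0) \<in> Words k"
    using block_in_Words[OF \<open>k \<le> j\<close> \<open>w0 \<in> Words j\<close>] \<open>0 < a\<close> by (simp add: a_def)
  ultimately show ?thesis
    by (metis (no_types, lifting) Words_length map_nth map_cong atLeastLessThan_iff set_upt)
qed

lemma card_factors_approx_le:
  fixes k L :: nat
  assumes "0 \<le> lam"
  defines "c \<equiv> lam + 1 / real (Suc k)"
  shows "real (card (factors approx L))
    \<le> (2 * real (len (Suc k)) * exp (2 * c * real (len (Suc k)))) * exp (c * real L)"
proof -
  define n where "n = len (Suc k)"
  define q where "q = L div n + 2"
  have "0 \<le> c" "0 < n" using assms len_pos by (simp_all add: c_def n_def)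
  have "card (factors approx L) \<le> n + n * card (Words (Suc k)) ^ q"
    unfolding n_def q_def using aligned_block_approx
    by (intro card_factors_le_blocks len_pos finite_Words)
  then have "real (card (factors approx L)) \<le> real n + real n * real (card (Words (Suc k))) ^ q"
    by (metis of_nat_add of_nat_le_iff of_nat_mult of_nat_power)
  also have "real (card (Words (Suc k))) ^ q \<le> exp (c * real n) ^ q"
    using card_Words[of k] by (intro power_mono) (simp_all add: c_def n_def)
  also have "\<dots> = exp (c * (real q * real n))"
    by (simp add: exp_of_nat_mult[symmetric] mult.commute mult.left_commute)
  also have "\<dots> \<le> exp (c * (real L + 2 * real n))"
  proof -
    have "L div n * n \<le> L" by (rule div_times_less_eq_dividend)
    then have "real q * real n \<le> real L + 2 * real n"
      unfolding q_def by (simp add: distrib_right of_nat_mult[symmetric] del: of_nat_mult)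
    then show ?thesis using \<open>0 \<le> c\<close> by (simp add: mult_left_mono)
  qed
  finally have "real (card (factors approx L)) \<le> real n + real n * exp (c * (real L + 2 * real n))"
    using \<open>0 < n\<close> by simp
  also have "\<dots> \<le> 2 * real n * exp (c * (real L + 2 * real n))"
  proof -
    have "1 \<le> exp (c * (real L + 2 * real n))" using \<open>0 \<le> c\<close> by simp
    then show ?thesis using mult_left_mono[of 1 _ "real n"] by simp
  qed
  also have "\<dots> = (2 * real n * exp (2 * c * real n)) * exp (c * real L)"
    by (simp add: exp_add[symmetric] algebra_simps)
  finally show ?thesis by (simp add: n_def)
qed

lemma anqie_entropy_approx_le:
  assumes "0 \<le> lam"
  shows "anqie_entropy approx \<le> ereal lam"
proof (rule ereal_le_epsilon2)
  fix e :: real assume "0 < e"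
  then obtain k where k: "1 / real (Suc k) < e"
    using reals_Archimedean by (auto simp: inverse_eq_divide)
  have "range approx \<subseteq> C" using approx_in_net_and_close by blast
  then have "finite (range approx)" using finite_net finite_subset by blast
  then have "anqie_entropy approx \<le> ereal (lam + 1 / real (Suc k))"
    using card_factors_approx_le[OF assms, where k = k] len_pos
    by (intro anqie_entropy_le_factor_growth[where D = "2 * real (len (Suc k)) * exp (2 * (lam + 1 / real (Suc k)) * real (len (Suc k)))"]) simp_all
  also have "\<dots> \<le> ereal lam + ereal e" using k by simp
  finally show "anqie_entropy approx \<le> ereal lam + ereal e" .
qed

end

lemma (in entropy_net) word_tower_exists: "\<exists>len Words ratio. word_tower f r lam C len Words ratio"
proof -
  define Q where "Q = (\<lambda>k (x :: nat \<times> 'a list set) (y :: nat \<times> 'a list set).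
      covering_words (fst y) (snd y) \<and> (\<exists>m\<ge>2. fst y = m * fst x \<and>
        (\<forall>w\<in>snd y. \<forall>t<m. take (fst x) (drop (t * fst x) w) \<in> snd x)) \<and>
        real (card (snd y)) \<le> exp ((lam + 1 / real (Suc k)) * real (fst y)))"
  have "\<exists>F. \<forall>k. covering_words (fst (F k)) (snd (F k)) \<and> Q k (F k) (F (Suc k))"
  proof (rule dependent_nat_choice)
    show "\<exists>x. covering_words (fst x) (snd x)"
      using covering_words_singletons by auto
    fix x k assume x: "covering_words (fst x) (snd x)"
    have "0 < 1 / real (Suc k)" by simp
    obtain m W' where "2 \<le> m" "covering_words (m * fst x) W'"
      "\<And>w t. w \<in> W' \<Longrightarrow> t < m \<Longrightarrow> take (fst x) (drop (t * fst x) w) \<in> snd x"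
      "real (card W') \<le> exp ((lam + 1 / real (Suc k)) * real (m * fst x))"
      using covering_words_refine[OF x \<open>0 < 1 / real (Suc k)\<close>] by blast
    then show "\<exists>y. covering_words (fst y) (snd y) \<and> Q k x y"
      unfolding Q_def by (intro exI[of _ "(m * fst x, W')"]) auto
  qed
  then obtain F where F: "\<And>k. covering_words (fst (F k)) (snd (F k))" "\<And>k. Q k (F k) (F (Suc k))"
    by blast
  define len where "len = (\<lambda>k. fst (F k))"
  define Words where "Words = (\<lambda>k. snd (F k))"
  have "word_tower f r lam C len Words (\<lambda>k. len (Suc k) div len k)"
  proof (unfold_locales)
    fix k
    show "covering_words (len k) (Words k)" using F(1) by (simp add: len_def Words_def)
    then have "0 < len k" by (simp add: covering_words_def)
    obtain m where m: "2 \<le> m" "len (Suc k) = m * len k"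
      "\<forall>w\<in>Words (Suc k). \<forall>t<m. take (len k) (drop (t * len k) w) \<in> Words k"
      using F(2)[of k] by (auto simp: Q_def len_def Words_def)
    then have ratio: "len (Suc k) div len k = m" using \<open>0 < len k\<close> by simp
    show "2 \<le> len (Suc k) div len k" "len (Suc k) = len (Suc k) div len k * len k"
      using m ratio by simp_all
    show "take (len k) (drop (t * len k) w) \<in> Words k"
      if "w \<in> Words (Suc k)" "t < len (Suc k) div len k" for w t
      using m(3) that ratio by simp
    show "real (card (Words (Suc k))) \<le> exp ((lam + 1 / real (Suc k)) * real (len (Suc k)))"
      using F(2)[of k] by (simp add: Q_def len_def Words_def)
  qed
  then show ?thesis by blast
qed

lemma anqie_entropy_finite_range_approximation:
  fixes f :: "nat \<Rightarrow> 'a::metric_space"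
  assumes "compact (closure (range f))" "anqie_entropy f \<le> ereal lam" "0 \<le> lam" "0 < r"
  obtains g where "range g \<subseteq> range f" "finite (range g)" "anqie_entropy g \<le> ereal lam"
    "\<And>n. dist (g n) (f n) < r"
proof -
  have "closure (range f) \<subseteq> (\<Union>c\<in>range f. ball c r)"
  proof
    fix x assume "x \<in> closure (range f)"
    then obtain y where "y \<in> range f" "dist y x < r"
      using \<open>0 < r\<close> closure_approachable by blast
    then show "x \<in> (\<Union>c\<in>range f. ball c r)" by auto
  qed
  then obtain C where C: "C \<subseteq> range f" "finite C" "closure (range f) \<subseteq> (\<Union>c\<in>C. ball c r)"
    using compactE_image[OF assms(1), of "range f" "\<lambda>c. ball c r"] by blast
  have "\<exists>c\<in>C. dist c x < r" if "x \<in> closure (range f)" for x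
    using subsetD[OF C(3) that] by auto
  with C(2) assms(2) interpret entropy_net f r lam C
    by unfold_locales
  obtain len Words ratio where "word_tower f r lam C len Words ratio"
    using word_tower_exists by blast
  then interpret word_tower f r lam C len Words ratio .
  have "range approx \<subseteq> C" using approx_in_net_and_close by blast
  then have "range approx \<subseteq> range f" "finite (range approx)"
    using C(1,2) finite_subset by auto
  moreover have "dist (approx n) (f n) < r" for n
    using approx_in_net_and_close by blast
  ultimately show ?thesis using that anqie_entropy_approx_le[OF \<open>0 \<le> lam\<close>] by blast
qed

theorem theorem6p3:
  shows
   "(\<forall>(X :: 'a::metric_space set) (f :: nat \<Rightarrow> 'a) (lam::real) (N::nat).
       compact X \<and> range f \<subseteq> X \<and> 0 \<le> lam \<and> anqie_entropy f = ereal lam \<and> N \<ge> 1 \<longrightarrow>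
       (\<exists>fN :: nat \<Rightarrow> 'a. range fN \<subseteq> range f \<and> finite (range fN) \<and>
          anqie_entropy fN \<le> ereal lam \<and> (\<forall>n. dist (fN n) (f n) \<le> 1 / real N)))
    \<and>
    (\<forall>(f :: nat \<Rightarrow> complex) (lam::real) (N::nat).
       bounded (range f) \<and> 0 \<le> lam \<and> anqie_entropy f = ereal lam \<and> N \<ge> 1 \<longrightarrow>
       (\<exists>fN :: nat \<Rightarrow> complex. finite (range fN) \<and>
          anqie_entropy fN \<le> ereal lam \<and> (\<forall>n. norm (fN n - f n) \<le> 1 / real N)))"
proof (intro conjI allI impI)
  fix X :: "'a set" and f :: "nat \<Rightarrow> 'a" and lam :: real and N :: nat
  assume a: "compact X \<and> range f \<subseteq> X \<and> 0 \<le> lam \<and> anqie_entropy f = ereal lam \<and> N \<ge> 1"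
  then have "compact (closure (range f))"
    by (metis closed_closure closure_minimal compact_imp_closed compact_Int_closed inf.absorb2)
  with a obtain g where "range g \<subseteq> range f" "finite (range g)" "anqie_entropy g \<le> ereal lam"
    "\<And>n. dist (g n) (f n) < 1 / real N"
    by (elim anqie_entropy_finite_range_approximation[of f lam "1 / real N"]) auto
  then show "\<exists>fN. range fN \<subseteq> range f \<and> finite (range fN) \<and>
      anqie_entropy fN \<le> ereal lam \<and> (\<forall>n. dist (fN n) (f n) \<le> 1 / real N)"
    by (meson less_imp_le)
next
  fix f :: "nat \<Rightarrow> complex" and lam :: real and N :: nat
  assume a: "bounded (range f) \<and> 0 \<le> lam \<and> anqie_entropy f = ereal lam \<and> N \<ge> 1"
  obtain g where "finite (range g)" "anqie_entropy g \<le> ereal lam"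
    "\<And>n. dist (g n) (f n) < 1 / real N"
    by (rule anqie_entropy_finite_range_approximation[of f lam "1 / real N"]) (use a in auto)
  then show "\<exists>fN. finite (range fN) \<and> anqie_entropy fN \<le> ereal lam \<and>
      (\<forall>n. norm (fN n - f n) \<le> 1 / real N)"
    by (metis dist_norm less_imp_le)
qed

end
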